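(* Assume $p$ is unbounded. Fix $m\ge1$ and positive integers $n_1<n_2<\cdots<n_m$. For each $k\ge1$ let $(r^{(k)}_1,\dots,r^{(k)}_m)$ be an $m$-tuple of positive integers with $\sum_{i=1}^m p_{r^{(k)}_i}>0$, such that $\min_{1\le i\le m}r^{(k)}_i\to\infty$ as $k\to\infty$, and such that for every $1\le j<m$, $$\limsup_{k\to\infty}\frac{r^{(k)}_j}{\min_{j<i\le m}r^{(k)}_i}<\infty.$$ Let $$E_k=\bigcup_{i=1}^m\Big\{M_{n_i}=r^{(k)}_i,\ M_{n_j}<r^{(k)}_j\ \text{for all } 1\le j\le m,\ j\ne i\Big\}.$$ Then, as $k\to\infty$, $$\mathbf{P}[E_k]\sim\sum_{i=1}^m\mu^{n_i}p_{r^{(k)}_i}.$$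
   Context: Let $p=(p_0,p_1,p_2,\dots)$ be a probability distribution on the nonnegative integers with mean $\mu=\sum_k kp_k\in(0,\infty)$, and let $\tau(p)$ be a Galton–Watson tree with offspring distribution $p$: it starts with a single root at generation $0$, and every vertex independently has $k$ children with probability $p_k$. The out-degree of a vertex is its number of children. $M_n$ denotes the maximal out-degree among the vertices of generation $n$ (with $M_n=0$ if generation $n$ is empty). The distribution $p$ is called unbounded if the set $\{r:p_r>0\}$ is unbounded. *)

theory Defs
  imports "HOL-Probability.Probability"
begin

text \<open>Galton-Watson tree via the Ulam-Harris construction: every potential vertex
  v (a finite list of child indices) carries an independent offspring number
  omega v with law p; the tree consists of the v whose every step stays below the
  offspring count of the parent.\<close>

definition gw_space :: "nat pmf \<Rightarrow> (nat list \<Rightarrow> nat) measure" where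
  "gw_space p = PiM UNIV (\<lambda>_. measure_pmf p)"

definition gw_tree :: "(nat list \<Rightarrow> nat) \<Rightarrow> nat list set" where
  "gw_tree \<omega> = {v. \<forall>j < length v. v ! j < \<omega> (take j v)}"

definition gen_max :: "(nat list \<Rightarrow> nat) \<Rightarrow> nat \<Rightarrow> nat" where
  "gen_max \<omega> n = Max (insert 0 (\<omega> ` {v \<in> gw_tree \<omega>. length v = n}))"

definition gw_mean :: "nat pmf \<Rightarrow> real" where
  "gw_mean p = measure_pmf.expectation p real"

end

theory Submission
  imports Defs "HOL-Library.Sublist"
begin

(*
  For a vertex v of generation n_i, the many-to-one formula gives
  sum_v P(v in T, omega v = r_i) = mu^n_i p_(r_i), which is at the same time a union bound
  for the event M_(n_i) = r_i.  Conversely, on {v in T, omega v = r_i} the i-th event of E_k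
  can only fail if a vertex outside the subtree of v reaches one of the thresholds -- an
  event independent of omega v whose expected weight tends to 0 -- or if a descendant of v
  in a later generation n_j has at least r_j children, which costs at most
  r_i mu^(n_j - 1) P(xi >= r_j).  The ratio condition makes r_i comparable to r_j, and
  t P(xi >= t) -> 0 for integrable xi, so both error terms are o(mu^n_i p_(r_i)); summing
  over the disjoint events gives the asymptotics.
*)

lemma emeasure_UN_le_nn_integral:
  assumes I: "countable I" and X[measurable]: "\<And>i. i \<in> I \<Longrightarrow> X i \<in> sets M"
  shows "emeasure M (\<Union>i\<in>I. X i) \<le> (\<integral>\<^sup>+i. emeasure M (X i) \<partial>count_space I)"
proof -
  have "indicator (\<Union>i\<in>I. X i) x \<le> (\<integral>\<^sup>+i. indicator (X i) x \<partial>count_space I :: ennreal)" for x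
  proof (cases "x \<in> (\<Union>i\<in>I. X i)")
    case True
    then obtain j where j: "j \<in> I" "x \<in> X j" by auto
    have "(1 :: ennreal) = (\<integral>\<^sup>+i. indicator (X i) x * indicator {j} i \<partial>count_space I)"
      using j by simp
    also have "\<dots> \<le> (\<integral>\<^sup>+i. indicator (X i) x \<partial>count_space I)"
      by (intro nn_integral_mono) (auto simp: indicator_def)
    finally show ?thesis using True by simp
  qed simp
  then have "emeasure M (\<Union>i\<in>I. X i) \<le> (\<integral>\<^sup>+x. \<integral>\<^sup>+i. indicator (X i) x \<partial>count_space I \<partial>M)"
    using I X by (subst nn_integral_indicator[symmetric]) (auto intro!: nn_integral_mono sets.countable_UN'')
  also have "\<dots> = (\<integral>\<^sup>+i. emeasure M (X i) \<partial>count_space I)"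
    using I by (subst nn_integral_count_space_nn_integral) (auto intro!: nn_integral_cong)
  finally show ?thesis .
qed

lemma filterlim_Min_image_subset:
  assumes "filterlim (\<lambda>k. Min (r k ` A)) at_top F" "finite A" "B \<subseteq> A" "B \<noteq> {}"
  shows "filterlim (\<lambda>k. Min (r k ` B)) at_top F"
  using assms by (intro filterlim_at_top_mono[OF assms(1)] always_eventually allI Min_antimono) auto

lemma asymp_equiv_sum_sandwich:
  fixes a b e :: "nat \<Rightarrow> 'i \<Rightarrow> real"
  assumes I: "finite I"
    and bounds: "\<forall>\<^sub>F k in sequentially. \<forall>i\<in>I. 0 \<le> a k i \<and> a k i \<le> b k i \<and> b k i \<le> a k i + b k i * e k i"
    and e: "\<And>i. i \<in> I \<Longrightarrow> (\<lambda>k. e k i) \<longlonglongrightarrow> 0"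
    and pos: "\<forall>\<^sub>F k in sequentially. 0 < (\<Sum>i\<in>I. b k i)"
  shows "(\<lambda>k. \<Sum>i\<in>I. a k i) \<sim>[sequentially] (\<lambda>k. \<Sum>i\<in>I. b k i)"
proof (rule asymp_equivI')
  define E where "E k = (\<Sum>i\<in>I. \<bar>e k i\<bar>)" for k
  have "E \<longlonglongrightarrow> (\<Sum>i\<in>I. \<bar>0\<bar>)"
    unfolding E_def by (intro tendsto_sum tendsto_rabs e)
  then have E: "(\<lambda>k. 1 - E k) \<longlonglongrightarrow> 1"
    using tendsto_diff[OF tendsto_const] by fastforce
  have ratio_bounds: "1 - E k \<le> (\<Sum>i\<in>I. a k i) / (\<Sum>i\<in>I. b k i) \<and> (\<Sum>i\<in>I. a k i) / (\<Sum>i\<in>I. b k i) \<le> 1"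
    if k: "\<forall>i\<in>I. 0 \<le> a k i \<and> a k i \<le> b k i \<and> b k i \<le> a k i + b k i * e k i"
      and B: "0 < (\<Sum>i\<in>I. b k i)" for k
  proof -
    have "b k i * e k i \<le> (\<Sum>i\<in>I. b k i) * \<bar>e k i\<bar>" if i: "i \<in> I" for i
    proof -
      have "b k i \<le> (\<Sum>i\<in>I. b k i)"
        using I i k by (intro member_le_sum) force+
      then show ?thesis
        using k i by (smt (verit) abs_ge_self mult_left_mono mult_right_mono abs_ge_zero)
    qed
    then have "(\<Sum>i\<in>I. b k i) \<le> (\<Sum>i\<in>I. a k i) + (\<Sum>i\<in>I. b k i) * E k"
      using k unfolding E_def sum_distrib_left sum.distrib[symmetric]
      by (intro sum_mono) (smt (verit))
    moreover have "(\<Sum>i\<in>I. a k i) \<le> (\<Sum>i\<in>I. b k i)"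
      using k by (intro sum_mono) auto
    ultimately show ?thesis
      using B by (simp add: field_simps)
  qed
  show "(\<lambda>k. (\<Sum>i\<in>I. a k i) / (\<Sum>i\<in>I. b k i)) \<longlonglongrightarrow> 1"
  proof (rule tendsto_sandwich[OF _ _ E tendsto_const])
    show "\<forall>\<^sub>F k in sequentially. 1 - E k \<le> (\<Sum>i\<in>I. a k i) / (\<Sum>i\<in>I. b k i)"
      using bounds pos by eventually_elim (use ratio_bounds in blast)
    show "\<forall>\<^sub>F k in sequentially. (\<Sum>i\<in>I. a k i) / (\<Sum>i\<in>I. b k i) \<le> 1"
      using bounds pos by eventually_elim (use ratio_bounds in blast)
  qed
qed

lemma sum_mult_pos:
  fixes c x :: "'i \<Rightarrow> real"
  assumes "finite I" "\<forall>i\<in>I. 0 < c i" "\<forall>i\<in>I. 0 \<le> x i" "0 < sum x I"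
  shows "0 < (\<Sum>i\<in>I. c i * x i)"
proof -
  obtain i where "i \<in> I" "0 < x i"
    using assms by (metis less_le sum_nonneg_eq_0_iff)
  then show ?thesis
    using assms by (intro sum_pos2[of _ i]) auto
qed

section \<open>The Ulam--Harris space and maximal out-degrees\<close>

lemma space_gw_space [simp]: "space (gw_space p) = UNIV"
  by (simp add: gw_space_def space_PiM)

lemma prob_space_gw_space: "prob_space (gw_space p)"
  unfolding gw_space_def by (intro prob_space_PiM prob_space_measure_pmf)

lemma emeasure_gw_space_eq_measure: "emeasure (gw_space p) A = ennreal (measure (gw_space p) A)"
proof -
  interpret prob_space "gw_space p" by (rule prob_space_gw_space)
  show ?thesis by (rule emeasure_eq_measure)
qed

lemma measurable_gw_coordinate [measurable]:
  "(\<lambda>\<omega>. \<omega> v) \<in> measurable (gw_space p) (count_space UNIV)"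
proof -
  have "(\<lambda>\<omega>. \<omega> v) \<in> measurable (gw_space p) (measure_pmf p)"
    unfolding gw_space_def by (rule measurable_component_singleton) simp
  then show ?thesis by (simp add: measurable_def)
qed

lemma pred_gw_coordinate [measurable]: "Measurable.pred (gw_space p) (\<lambda>\<omega>. P (\<omega> v))"
  using measurable_compose[OF measurable_gw_coordinate, of "\<lambda>y. P y" "count_space UNIV"] by simp

lemma sets_gw_space_Collect:
  assumes [measurable]: "Measurable.pred (gw_space p) P"
  shows "{\<omega>. P \<omega>} \<in> sets (gw_space p)"
proof -
  have "{\<omega> \<in> space (gw_space p). P \<omega>} \<in> sets (gw_space p)" by measurable
  then show ?thesis by simp
qed

lemma emeasure_gw_space_Int_coordinate:
  assumes S: "S \<in> sets (gw_space p)" and S_indep: "\<And>f y. f(v := y) \<in> S \<longleftrightarrow> f \<in> S"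
  shows "emeasure (gw_space p) (S \<inter> {\<omega>. \<omega> v \<in> R})
    = emeasure (gw_space p) S * emeasure (measure_pmf p) R"
proof -
  let ?Q = "PiM (UNIV - {v}) (\<lambda>_. measure_pmf p)"
  let ?upd = "\<lambda>(x, f). f(v := x)"
  interpret Q: prob_space ?Q by (intro prob_space_PiM prob_space_measure_pmf)
  have UNIV_eq: "insert v (UNIV - {v}) = UNIV" by auto
  have distr_eq: "distr (measure_pmf p \<Otimes>\<^sub>M ?Q) (gw_space p) ?upd = gw_space p"
    using distr_pair_PiM_eq_PiM[of "UNIV - {v}" "\<lambda>_. measure_pmf p" v]
    unfolding gw_space_def UNIV_eq by (simp add: prob_space_measure_pmf)
  have upd_measurable: "?upd \<in> measurable (measure_pmf p \<Otimes>\<^sub>M ?Q) (gw_space p)"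
    unfolding gw_space_def split_beta by (rule measurable_fun_upd[where J="UNIV - {v}"]) auto
  define S' where "S' = (\<lambda>f. f(v := 0)) -` S \<inter> space ?Q"
  have "(\<lambda>f. f(v := 0)) \<in> measurable ?Q (gw_space p)"
    unfolding gw_space_def by (rule measurable_fun_upd[where J="UNIV - {v}"]) auto
  then have S': "S' \<in> sets ?Q"
    unfolding S'_def using S by (rule measurable_sets)
  have S_coord: "S \<inter> {f. f v \<in> R'} \<in> sets (gw_space p)" for R'
    using S by (intro sets.Int sets_gw_space_Collect pred_gw_coordinate)
  have preimage: "?upd -` (S \<inter> {f. f v \<in> R'}) \<inter> space (measure_pmf p \<Otimes>\<^sub>M ?Q) = R' \<times> S'" for R'
    using S_indep by (fastforce simp: S'_def space_pair_measure)
  have emeasure_S_coord: "emeasure (gw_space p) (S \<inter> {f. f v \<in> R'}) = emeasure (measure_pmf p) R' * emeasure ?Q S'"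
    for R'
  proof -
    have "emeasure (gw_space p) (S \<inter> {f. f v \<in> R'})
        = emeasure (measure_pmf p \<Otimes>\<^sub>M ?Q) (?upd -` (S \<inter> {f. f v \<in> R'}) \<inter> space (measure_pmf p \<Otimes>\<^sub>M ?Q))"
      using emeasure_distr[OF upd_measurable S_coord[of R']] by (simp only: distr_eq)
    then show ?thesis
      using Q.emeasure_pair_measure_Times[OF _ S', of R' "measure_pmf p"] by (simp only: preimage) simp
  qed
  from emeasure_S_coord[of R] emeasure_S_coord[of UNIV] show ?thesis
    by (simp add: measure_pmf.emeasure_space_1[simplified] mult.commute)
qed

lemma Nil_in_gw_tree [simp]: "[] \<in> gw_tree f"
  by (simp add: gw_tree_def)

lemma snoc_in_gw_tree_iff: "v @ [c] \<in> gw_tree f \<longleftrightarrow> v \<in> gw_tree f \<and> c < f v"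
  by (auto simp: gw_tree_def nth_append less_Suc_eq)

lemma in_gw_tree_fun_upd:
  assumes "\<not> strict_prefix w u"
  shows "u \<in> gw_tree (f(w := y)) \<longleftrightarrow> u \<in> gw_tree f"
proof -
  have "take j u \<noteq> w" if "j < length u" for j
    using assms that take_is_prefix[of j u] by (auto simp: strict_prefix_def)
  then show ?thesis by (auto simp: gw_tree_def)
qed

lemma pred_in_gw_tree [measurable]: "Measurable.pred (gw_space p) (\<lambda>\<omega>. v \<in> gw_tree \<omega>)"
  unfolding gw_tree_def by measurable

lemma finite_gw_generation: "finite {v \<in> gw_tree f. length v = n}"
proof (induction n)
  case 0
  have "{v \<in> gw_tree f. length v = 0} \<subseteq> {[]}" by auto
  then show ?case by (rule finite_subset) simp
next
  case (Suc n)
  have "{v \<in> gw_tree f. length v = Suc n}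
      \<subseteq> (\<Union>u\<in>{v \<in> gw_tree f. length v = n}. (\<lambda>c. u @ [c]) ` {..<f u})"
  proof
    fix v assume v: "v \<in> {v \<in> gw_tree f. length v = Suc n}"
    then obtain u c where "v = u @ [c]"
      by (auto simp: length_Suc_conv_rev)
    with v show "v \<in> (\<Union>u\<in>{v \<in> gw_tree f. length v = n}. (\<lambda>c. u @ [c]) ` {..<f u})"
      by (auto simp: snoc_in_gw_tree_iff)
  qed
  then show ?case by (rule finite_subset) (auto intro: Suc.IH)
qed

lemma le_gen_max_iff: "0 < t \<Longrightarrow> t \<le> gen_max f n \<longleftrightarrow> (\<exists>v\<in>gw_tree f. length v = n \<and> t \<le> f v)"
  unfolding gen_max_def using finite_gw_generation[of f n] by (subst Max_ge_iff) auto

lemma pred_le_gen_max [measurable]: "Measurable.pred (gw_space p) (\<lambda>\<omega>. t \<le> gen_max \<omega> n)"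
proof (cases "t = 0")
  case False
  then show ?thesis by (subst le_gen_max_iff) (simp_all only: Bex_def, measurable)
qed simp

lemma measurable_gen_max [measurable]:
  "(\<lambda>\<omega>. gen_max \<omega> n) \<in> measurable (gw_space p) (count_space UNIV)"
proof -
  have "{\<omega>. gen_max \<omega> n = a} = {\<omega>. a \<le> gen_max \<omega> n} - {\<omega>. Suc a \<le> gen_max \<omega> n}" for a
    by auto
  then show ?thesis
    by (auto simp: measurable_count_space_eq2_countable vimage_def
        intro!: sets.Diff sets_gw_space_Collect pred_le_gen_max)
qed

definition gen_max_hits :: "(nat \<Rightarrow> nat) \<Rightarrow> (nat \<Rightarrow> nat) \<Rightarrow> nat \<Rightarrow> nat \<Rightarrow> (nat list \<Rightarrow> nat) set" where
  "gen_max_hits n \<rho> m i = {f. gen_max f (n i) = \<rho> i \<and> (\<forall>j\<in>{1..m}. j \<noteq> i \<longrightarrow> gen_max f (n j) < \<rho> j)}"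

definition some_gen_max_reaches :: "(nat \<Rightarrow> nat) \<Rightarrow> (nat \<Rightarrow> nat) \<Rightarrow> nat \<Rightarrow> (nat list \<Rightarrow> nat) set" where
  "some_gen_max_reaches n \<rho> m = {f. \<exists>j\<in>{1..m}. \<rho> j \<le> gen_max f (n j)}"

lemma sets_gen_max_hits [measurable]: "gen_max_hits n \<rho> m i \<in> sets (gw_space p)"
  unfolding gen_max_hits_def by (intro sets_gw_space_Collect) measurable

lemma sets_some_gen_max_reaches [measurable]: "some_gen_max_reaches n \<rho> m \<in> sets (gw_space p)"
  unfolding some_gen_max_reaches_def by (intro sets_gw_space_Collect) measurable

lemma measure_gen_max_hits_Union:
  "measure (gw_space p) {\<omega> \<in> space (gw_space p). \<exists>i\<in>{1..m}. gen_max \<omega> (n i) = \<rho> i \<and>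
      (\<forall>j\<in>{1..m}. j \<noteq> i \<longrightarrow> gen_max \<omega> (n j) < \<rho> j)}
    = (\<Sum>i=1..m. measure (gw_space p) (gen_max_hits n \<rho> m i))"
proof -
  have "{\<omega> \<in> space (gw_space p). \<exists>i\<in>{1..m}. gen_max \<omega> (n i) = \<rho> i \<and>
      (\<forall>j\<in>{1..m}. j \<noteq> i \<longrightarrow> gen_max \<omega> (n j) < \<rho> j)} = (\<Union>i\<in>{1..m}. gen_max_hits n \<rho> m i)"
    by (auto simp: gen_max_hits_def)
  moreover have "disjoint_family_on (gen_max_hits n \<rho> m) {1..m}"
    unfolding disjoint_family_on_def gen_max_hits_def by fastforce
  ultimately show ?thesis
    by (simp only:) (intro measure_finite_Union; auto simp: emeasure_gw_space_eq_measure)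
qed

section \<open>First moment bounds\<close>

definition ulam_generation :: "nat \<Rightarrow> nat list set" where
  "ulam_generation d = {v. length v = d}"

lemma countable_ulam_generation [simp]: "countable (ulam_generation d)"
  by (rule countable_subset[OF subset_UNIV]) simp

lemma ulam_generation_0 [simp]: "ulam_generation 0 = {[]}"
  by (auto simp: ulam_generation_def)

lemma nn_integral_ulam_generation_Suc:
  "(\<integral>\<^sup>+v. f v \<partial>count_space (ulam_generation (Suc d)))
    = (\<integral>\<^sup>+c. \<integral>\<^sup>+v. f (c # v) \<partial>count_space (ulam_generation d) \<partial>count_space UNIV)"
proof -
  interpret sigma_finite_measure "count_space (ulam_generation d)"
    by (rule sigma_finite_measure_count_space_countable) simp
  have "bij_betw (\<lambda>(c, v). c # v) (UNIV \<times> ulam_generation d) (ulam_generation (Suc d))"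
    by (rule bij_betwI[where g="\<lambda>v. (hd v, tl v)"]) (auto simp: ulam_generation_def length_Suc_conv)
  then have "(\<integral>\<^sup>+v. f v \<partial>count_space (ulam_generation (Suc d)))
      = (\<integral>\<^sup>+z. f (fst z # snd z) \<partial>(count_space UNIV \<Otimes>\<^sub>M count_space (ulam_generation d)))"
    by (simp add: nn_integral_bij_count_space[symmetric] pair_measure_countable split_beta)
  also have "\<dots> = (\<integral>\<^sup>+c. \<integral>\<^sup>+v. f (c # v) \<partial>count_space (ulam_generation d) \<partial>count_space UNIV)"
    by (subst nn_integral_fst[symmetric]) (auto simp: pair_measure_countable)
  finally show ?thesis .
qed

lemma gw_mean_nonneg: "gw_mean p \<ge> 0"
  unfolding gw_mean_def by (rule integral_nonneg_AE) auto

lemma emeasure_in_gw_tree_coordinate: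
  "emeasure (gw_space p) ({f. v \<in> gw_tree f} \<inter> {f. f v \<in> R})
    = emeasure (gw_space p) {f. v \<in> gw_tree f} * emeasure (measure_pmf p) R"
  by (rule emeasure_gw_space_Int_coordinate) (auto simp: in_gw_tree_fun_upd intro: sets_gw_space_Collect)

context
  fixes p :: "nat pmf"
  assumes mean_finite: "integrable (measure_pmf p) real"
begin

lemma nn_integral_tail_eq_gw_mean:
  "(\<integral>\<^sup>+c. emeasure (measure_pmf p) {c<..} \<partial>count_space UNIV) = ennreal (gw_mean p)"
proof -
  have "(\<integral>\<^sup>+c. emeasure (measure_pmf p) {c<..} \<partial>count_space UNIV)
      = (\<Sum>c. emeasure (measure_pmf p) {x \<in> space (measure_pmf p). enat c < enat x})"
    by (simp add: nn_integral_count_space_nat greaterThan_def)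
  also have "\<dots> = (\<integral>\<^sup>+x. ennreal_of_enat (enat x) \<partial>measure_pmf p)"
    by (rule nn_integral_enat_function[symmetric]) simp
  also have "\<dots> = (\<integral>\<^sup>+x. ennreal (real x) \<partial>measure_pmf p)"
    by (simp add: ennreal_of_nat_eq_real_of_nat)
  also have "\<dots> = ennreal (gw_mean p)"
    unfolding gw_mean_def using mean_finite by (intro nn_integral_eq_integral) auto
  finally show ?thesis .
qed

(* The many-to-one formula, for events S that do not look at the subtree below w. *)
lemma nn_integral_descendants_in_gw_tree:
  assumes S: "S \<in> sets (gw_space p)" and S_indep: "\<And>x f y. f(w @ x := y) \<in> S \<longleftrightarrow> f \<in> S"
  shows "(\<integral>\<^sup>+x. emeasure (gw_space p) ({f. w @ x \<in> gw_tree f} \<inter> S) \<partial>count_space (ulam_generation d))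
    = ennreal (gw_mean p ^ d) * emeasure (gw_space p) ({f. w \<in> gw_tree f} \<inter> S)"
  using S_indep
proof (induction d arbitrary: w)
  case 0
  then show ?case by (simp add: nn_integral_count_space_finite)
next
  case (Suc d)
  let ?P = "emeasure (gw_space p)"
  have child: "?P ({f. w @ [c] \<in> gw_tree f} \<inter> S)
      = ?P ({f. w \<in> gw_tree f} \<inter> S) * emeasure (measure_pmf p) {c<..}" for c
  proof -
    have "{f. w @ [c] \<in> gw_tree f} \<inter> S = ({f. w \<in> gw_tree f} \<inter> S) \<inter> {f. f w \<in> {c<..}}"
      by (auto simp: snoc_in_gw_tree_iff)
    also have "?P \<dots> = ?P ({f. w \<in> gw_tree f} \<inter> S) * emeasure (measure_pmf p) {c<..}"
    proof (intro emeasure_gw_space_Int_coordinate)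
      show "{f. w \<in> gw_tree f} \<inter> S \<in> sets (gw_space p)"
        using S by (intro sets.Int sets_gw_space_Collect pred_in_gw_tree)
      fix f y
      have "f(w := y) \<in> S \<longleftrightarrow> f \<in> S" using Suc.prems by (metis append_Nil2)
      moreover have "w \<in> gw_tree (f(w := y)) \<longleftrightarrow> w \<in> gw_tree f" by (simp add: in_gw_tree_fun_upd)
      ultimately show "f(w := y) \<in> {f. w \<in> gw_tree f} \<inter> S \<longleftrightarrow> f \<in> {f. w \<in> gw_tree f} \<inter> S"
        by (simp only: Int_iff mem_Collect_eq)
    qed
    finally show ?thesis .
  qed
  have "(\<integral>\<^sup>+x. ?P ({f. w @ x \<in> gw_tree f} \<inter> S) \<partial>count_space (ulam_generation (Suc d)))
      = (\<integral>\<^sup>+c. \<integral>\<^sup>+x. ?P ({f. (w @ [c]) @ x \<in> gw_tree f} \<inter> S) \<partial>count_space (ulam_generation d) \<partial>count_space UNIV)"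
    by (simp add: nn_integral_ulam_generation_Suc)
  also have "\<dots> = (\<integral>\<^sup>+c. ennreal (gw_mean p ^ d) * ?P ({f. w @ [c] \<in> gw_tree f} \<inter> S) \<partial>count_space UNIV)"
    using Suc.prems by (intro nn_integral_cong Suc.IH) simp
  also have "\<dots> = ennreal (gw_mean p ^ d) * ?P ({f. w \<in> gw_tree f} \<inter> S)
      * (\<integral>\<^sup>+c. emeasure (measure_pmf p) {c<..} \<partial>count_space UNIV)"
    by (simp add: child nn_integral_cmult mult.assoc)
  also have "\<dots> = ennreal (gw_mean p ^ Suc d) * ?P ({f. w \<in> gw_tree f} \<inter> S)"
    using gw_mean_nonneg[of p] by (simp add: nn_integral_tail_eq_gw_mean ennreal_mult' mult_ac)
  finally show ?case .
qed

lemma nn_integral_in_gw_tree: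
  "(\<integral>\<^sup>+v. emeasure (gw_space p) {f. v \<in> gw_tree f} \<partial>count_space (ulam_generation n))
    = ennreal (gw_mean p ^ n)"
  using nn_integral_descendants_in_gw_tree[of "space (gw_space p)" "[]" n]
    prob_space.emeasure_space_1[OF prob_space_gw_space, of p] sets.top[of "gw_space p"]
  by simp

lemma emeasure_le_generation_coordinate:
  assumes "A \<subseteq> (\<Union>v\<in>ulam_generation n. {f. v \<in> gw_tree f} \<inter> {f. f v \<in> R})"
  shows "emeasure (gw_space p) A \<le> ennreal (gw_mean p ^ n) * emeasure (measure_pmf p) R"
proof -
  have sets: "{f. v \<in> gw_tree f} \<inter> {f. f v \<in> R} \<in> sets (gw_space p)" for v
    by (intro sets.Int sets_gw_space_Collect pred_in_gw_tree pred_gw_coordinate)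
  have "emeasure (gw_space p) A
      \<le> emeasure (gw_space p) (\<Union>v\<in>ulam_generation n. {f. v \<in> gw_tree f} \<inter> {f. f v \<in> R})"
    using assms sets by (intro emeasure_mono sets.countable_UN'') auto
  also have "\<dots> \<le> (\<integral>\<^sup>+v. emeasure (gw_space p) ({f. v \<in> gw_tree f} \<inter> {f. f v \<in> R})
      \<partial>count_space (ulam_generation n))"
    using sets by (intro emeasure_UN_le_nn_integral) auto
  finally show ?thesis
    by (simp add: emeasure_in_gw_tree_coordinate nn_integral_multc nn_integral_in_gw_tree)
qed

lemma measure_le_gen_max_le:
  assumes "0 < t"
  shows "measure (gw_space p) {f. t \<le> gen_max f n} \<le> gw_mean p ^ n * measure (measure_pmf p) {t..}"
proof -
  have "emeasure (gw_space p) {f. t \<le> gen_max f n} \<le> ennreal (gw_mean p ^ n) * emeasure (measure_pmf p) {t..}"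
    using assms by (intro emeasure_le_generation_coordinate) (auto simp: le_gen_max_iff ulam_generation_def)
  then show ?thesis
    using gw_mean_nonneg[of p] by (simp add: emeasure_gw_space_eq_measure
        measure_pmf.emeasure_eq_measure ennreal_mult[symmetric] ennreal_le_iff)
qed

lemma measure_gen_max_eq_le:
  assumes "0 < r"
  shows "measure (gw_space p) {f. gen_max f n = r \<and> Q f} \<le> gw_mean p ^ n * pmf p r"
proof -
  have "emeasure (gw_space p) {f. gen_max f n = r \<and> Q f} \<le> ennreal (gw_mean p ^ n) * emeasure (measure_pmf p) {r}"
  proof (intro emeasure_le_generation_coordinate subsetI)
    fix f assume "f \<in> {f. gen_max f n = r \<and> Q f}"
    then have "r \<le> gen_max f n" "\<not> Suc r \<le> gen_max f n" by auto
    then obtain v where "v \<in> gw_tree f" "length v = n" "f v = r"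
      using assms by (force simp: le_gen_max_iff)
    then show "f \<in> (\<Union>v\<in>ulam_generation n. {f. v \<in> gw_tree f} \<inter> {f. f v \<in> {r}})"
      by (auto simp: ulam_generation_def)
  qed
  then show ?thesis
    using gw_mean_nonneg[of p]
    by (simp add: emeasure_gw_space_eq_measure emeasure_pmf_single ennreal_mult[symmetric] ennreal_le_iff)
qed

lemma nn_integral_children_in_gw_tree:
  "(\<integral>\<^sup>+c. emeasure (gw_space p) ({f. v @ [c] \<in> gw_tree f} \<inter> {f. f v = r}) \<partial>count_space UNIV)
    = emeasure (gw_space p) {f. v \<in> gw_tree f} * ennreal (pmf p r) * of_nat r"
proof -
  have "{f. v @ [c] \<in> gw_tree f} \<inter> {f. f v = r}
      = (if c < r then {f. v \<in> gw_tree f} \<inter> {f. f v \<in> {r}} else {})" for c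
    by (auto simp: snoc_in_gw_tree_iff)
  then have "(\<integral>\<^sup>+c. emeasure (gw_space p) ({f. v @ [c] \<in> gw_tree f} \<inter> {f. f v = r}) \<partial>count_space UNIV)
      = (\<integral>\<^sup>+c. emeasure (gw_space p) {f. v \<in> gw_tree f} * ennreal (pmf p r) * indicator {..<r} c \<partial>count_space UNIV)"
    using emeasure_in_gw_tree_coordinate[of p v "{r}"] by (intro nn_integral_cong) (simp add: emeasure_pmf_single)
  also have "\<dots> = emeasure (gw_space p) {f. v \<in> gw_tree f} * ennreal (pmf p r) * of_nat r"
    by (subst nn_integral_indicator_finite) (auto simp: mult_ac)
  finally show ?thesis .
qed

lemma emeasure_descendant_ge_le:
  "emeasure (gw_space p) ({f. f v = r} \<inter> {f. \<exists>x\<in>ulam_generation (Suc d). v @ x \<in> gw_tree f \<and> t \<le> f (v @ x)})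
    \<le> emeasure (gw_space p) {f. v \<in> gw_tree f} * ennreal (pmf p r) * of_nat r * ennreal (gw_mean p ^ d)
      * emeasure (measure_pmf p) {t..}"
proof -
  let ?P = "emeasure (gw_space p)"
  let ?Y = "\<lambda>x. {f. f v = r} \<inter> {f. v @ x \<in> gw_tree f}"
  have Y_sets: "?Y x \<in> sets (gw_space p)" for x
    by (intro sets.Int sets_gw_space_Collect pred_in_gw_tree pred_gw_coordinate)
  have "?P ({f. f v = r} \<inter> {f. \<exists>x\<in>ulam_generation (Suc d). v @ x \<in> gw_tree f \<and> t \<le> f (v @ x)})
      = ?P (\<Union>x\<in>ulam_generation (Suc d). ?Y x \<inter> {f. f (v @ x) \<in> {t..}})"
    by (intro arg_cong[where f="?P"]) auto
  also have "\<dots> \<le> (\<integral>\<^sup>+x. ?P (?Y x \<inter> {f. f (v @ x) \<in> {t..}}) \<partial>count_space (ulam_generation (Suc d)))"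
    using Y_sets by (intro emeasure_UN_le_nn_integral sets.Int sets_gw_space_Collect pred_gw_coordinate) auto
  also have "\<dots> = (\<integral>\<^sup>+x. ?P (?Y x) * emeasure (measure_pmf p) {t..} \<partial>count_space (ulam_generation (Suc d)))"
  proof (intro nn_integral_cong emeasure_gw_space_Int_coordinate Y_sets)
    fix x f y assume "x \<in> space (count_space (ulam_generation (Suc d)))"
    then have "x \<noteq> []" by (auto simp: ulam_generation_def)
    then show "f(v @ x := y) \<in> ?Y x \<longleftrightarrow> f \<in> ?Y x" by (simp add: in_gw_tree_fun_upd)
  qed
  also have "\<dots> = emeasure (measure_pmf p) {t..} * (\<integral>\<^sup>+c. \<integral>\<^sup>+x.
      ?P ({f. (v @ [c]) @ x \<in> gw_tree f} \<inter> {f. f v = r}) \<partial>count_space (ulam_generation d) \<partial>count_space UNIV)"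
    by (subst nn_integral_multc, simp, subst nn_integral_ulam_generation_Suc)
      (simp add: Int_commute mult.commute)
  also have "\<dots> = emeasure (measure_pmf p) {t..}
      * (\<integral>\<^sup>+c. ennreal (gw_mean p ^ d) * ?P ({f. v @ [c] \<in> gw_tree f} \<inter> {f. f v = r}) \<partial>count_space UNIV)"
    by (intro arg_cong2[where f="(*)"] nn_integral_cong nn_integral_descendants_in_gw_tree refl
        sets_gw_space_Collect pred_gw_coordinate) simp
  also have "\<dots> = emeasure (measure_pmf p) {t..} * ennreal (gw_mean p ^ d)
      * (\<integral>\<^sup>+c. ?P ({f. v @ [c] \<in> gw_tree f} \<inter> {f. f v = r}) \<partial>count_space UNIV)"
    by (simp add: nn_integral_cmult mult.assoc)
  finally show ?thesis
    by (simp add: nn_integral_children_in_gw_tree mult_ac)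
qed

section \<open>The lower bound\<close>

definition gen_max_hits_error :: "(nat \<Rightarrow> nat) \<Rightarrow> (nat \<Rightarrow> nat) \<Rightarrow> nat \<Rightarrow> nat \<Rightarrow> real" where
  "gen_max_hits_error n \<rho> m i =
    enn2real (\<integral>\<^sup>+v. emeasure (gw_space p) ({f. v \<in> gw_tree f} \<inter> some_gen_max_reaches n \<rho> m)
      \<partial>count_space (ulam_generation (n i)))
    + (\<Sum>j\<in>{j\<in>{1..m}. n i < n j}. real (\<rho> i) * gw_mean p ^ (n j - 1) * measure (measure_pmf p) {\<rho> j..})"

lemma ennreal_gen_max_hits_error:
  "ennreal (gen_max_hits_error n \<rho> m i) =
    (\<integral>\<^sup>+v. emeasure (gw_space p) ({f. v \<in> gw_tree f} \<inter> some_gen_max_reaches n \<rho> m)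
      \<partial>count_space (ulam_generation (n i)))
    + (\<Sum>j\<in>{j\<in>{1..m}. n i < n j}. of_nat (\<rho> i) * ennreal (gw_mean p ^ (n j - 1)) * emeasure (measure_pmf p) {\<rho> j..})"
proof -
  let ?D = "\<integral>\<^sup>+v. emeasure (gw_space p) ({f. v \<in> gw_tree f} \<inter> some_gen_max_reaches n \<rho> m)
      \<partial>count_space (ulam_generation (n i))"
  have "?D \<le> (\<integral>\<^sup>+v. emeasure (gw_space p) {f. v \<in> gw_tree f} \<partial>count_space (ulam_generation (n i)))"
    by (intro nn_integral_mono emeasure_mono) (auto intro: sets_gw_space_Collect)
  also have "\<dots> < \<top>" by (simp add: nn_integral_in_gw_tree)
  finally have "ennreal (enn2real ?D) = ?D" by simp
  moreover have "ennreal (real (\<rho> i) * gw_mean p ^ (n j - 1) * measure (measure_pmf p) {\<rho> j..})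
      = of_nat (\<rho> i) * ennreal (gw_mean p ^ (n j - 1)) * emeasure (measure_pmf p) {\<rho> j..}" for j
    using gw_mean_nonneg[of p]
    by (simp add: ennreal_mult ennreal_of_nat_eq_real_of_nat measure_pmf.emeasure_eq_measure)
  moreover have "ennreal (gen_max_hits_error n \<rho> m i) = ennreal (enn2real ?D)
      + (\<Sum>j\<in>{j\<in>{1..m}. n i < n j}. ennreal (real (\<rho> i) * gw_mean p ^ (n j - 1) * measure (measure_pmf p) {\<rho> j..}))"
    using gw_mean_nonneg[of p] unfolding gen_max_hits_error_def
    by (subst sum_ennreal) (auto intro!: ennreal_plus sum_nonneg)
  ultimately show ?thesis by simp
qed

lemma gen_max_hits_error_nonneg: "0 \<le> gen_max_hits_error n \<rho> m i"
  using gw_mean_nonneg[of p] unfolding gen_max_hits_error_def by (intro add_nonneg_nonneg sum_nonneg) auto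

(*
  Fix a vertex v of generation n i with offspring \<rho> i.  Either v is the only vertex of its
  generation with offspring \<ge> \<rho> i and all other generations stay below their thresholds
  (lone_max v, a subset of gen_max_hits), or some vertex outside the subtree of v reaches a
  threshold (high_outside v, which does not depend on the offspring of v), or a descendant of v
  in a later generation n j reaches \<rho> j (high_descendant v j).
*)
context
  fixes m :: nat and n \<rho> :: "nat \<Rightarrow> nat" and i :: nat
  assumes i: "i \<in> {1..m}" and \<rho>_pos: "\<forall>j\<in>{1..m}. 0 < \<rho> j" and n_inj: "inj_on n {1..m}"
begin

definition lone_max :: "nat list \<Rightarrow> (nat list \<Rightarrow> nat) set" where
  "lone_max v = {f. v \<in> gw_tree f \<and> f v = \<rho> i \<and> (\<forall>w\<in>gw_tree f. length w = n i \<and> w \<noteq> v \<longrightarrow> f w < \<rho> i)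
    \<and> (\<forall>j\<in>{1..m}. j \<noteq> i \<longrightarrow> gen_max f (n j) < \<rho> j)}"

definition high_outside :: "nat list \<Rightarrow> (nat list \<Rightarrow> nat) set" where
  "high_outside v = {f. \<exists>u\<in>gw_tree f. \<not> prefix v u \<and> (\<exists>j\<in>{1..m}. length u = n j \<and> \<rho> j \<le> f u)}"

definition high_descendant :: "nat list \<Rightarrow> nat \<Rightarrow> (nat list \<Rightarrow> nat) set" where
  "high_descendant v j = {f. \<exists>x\<in>ulam_generation (n j - n i). v @ x \<in> gw_tree f \<and> \<rho> j \<le> f (v @ x)}"

lemma sets_lone_max [measurable]: "lone_max v \<in> sets (gw_space p)"
  unfolding lone_max_def by (intro sets_gw_space_Collect) (simp only: Ball_def, measurable)

lemma sets_high_outside [measurable]: "high_outside v \<in> sets (gw_space p)"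
  unfolding high_outside_def by (intro sets_gw_space_Collect) (simp only: Bex_def, measurable)

lemma sets_high_descendant [measurable]: "high_descendant v j \<in> sets (gw_space p)"
  unfolding high_descendant_def by (intro sets_gw_space_Collect) (simp only: Bex_def, measurable)

lemma lone_max_subset_gen_max_hits:
  assumes "v \<in> ulam_generation (n i)"
  shows "lone_max v \<subseteq> gen_max_hits n \<rho> m i"
proof
  fix f assume f: "f \<in> lone_max v"
  have "\<rho> i \<le> gen_max f (n i)"
    using f assms i \<rho>_pos by (subst le_gen_max_iff) (auto simp: lone_max_def ulam_generation_def)
  moreover have "\<not> Suc (\<rho> i) \<le> gen_max f (n i)"
    using f le_gen_max_iff[of "Suc (\<rho> i)" f "n i"] by (force simp: lone_max_def)
  ultimately show "f \<in> gen_max_hits n \<rho> m i"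
    using f by (auto simp: gen_max_hits_def lone_max_def)
qed

lemma disjoint_family_lone_max: "disjoint_family_on lone_max (ulam_generation (n i))"
  unfolding disjoint_family_on_def lone_max_def ulam_generation_def by auto

lemma nn_integral_lone_max_le:
  "(\<integral>\<^sup>+v. emeasure (gw_space p) (lone_max v) \<partial>count_space (ulam_generation (n i)))
    \<le> emeasure (gw_space p) (gen_max_hits n \<rho> m i)"
proof -
  have "(\<integral>\<^sup>+v. emeasure (gw_space p) (lone_max v) \<partial>count_space (ulam_generation (n i)))
      = emeasure (gw_space p) (\<Union>v\<in>ulam_generation (n i). lone_max v)"
    using disjoint_family_lone_max by (intro emeasure_UN_countable[symmetric]) auto
  also have "\<dots> \<le> emeasure (gw_space p) (gen_max_hits n \<rho> m i)"
    using lone_max_subset_gen_max_hits by (intro emeasure_mono) auto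
  finally show ?thesis .
qed

lemma in_gw_tree_coordinate_subset:
  assumes v: "v \<in> ulam_generation (n i)"
  shows "{f. v \<in> gw_tree f} \<inter> {f. f v \<in> {\<rho> i}}
    \<subseteq> lone_max v \<union> ({f. v \<in> gw_tree f} \<inter> high_outside v \<inter> {f. f v \<in> {\<rho> i}})
      \<union> (\<Union>j\<in>{j\<in>{1..m}. n i < n j}. {f. f v \<in> {\<rho> i}} \<inter> high_descendant v j)"
proof
  fix f assume f: "f \<in> {f. v \<in> gw_tree f} \<inter> {f. f v \<in> {\<rho> i}}"
  show "f \<in> lone_max v \<union> ({f. v \<in> gw_tree f} \<inter> high_outside v \<inter> {f. f v \<in> {\<rho> i}})
      \<union> (\<Union>j\<in>{j\<in>{1..m}. n i < n j}. {f. f v \<in> {\<rho> i}} \<inter> high_descendant v j)"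
  proof (cases "f \<in> lone_max v \<or> f \<in> high_outside v")
    case False
    then consider w where "w \<in> gw_tree f" "length w = n i" "w \<noteq> v" "\<rho> i \<le> f w"
      | j where "j \<in> {1..m}" "j \<noteq> i" "\<rho> j \<le> gen_max f (n j)"
      using f by (force simp: lone_max_def)
    then have "\<exists>j\<in>{j\<in>{1..m}. n i < n j}. f \<in> high_descendant v j"
    proof cases
      case 1
      have "\<not> prefix v w"
      proof
        assume "prefix v w"
        then obtain zs where "w = v @ zs" by (auto simp: prefix_def)
        with 1 v show False by (simp add: ulam_generation_def)
      qed
      with 1 i False show ?thesis by (auto simp: high_outside_def)
    next
      case j: 2
      then obtain u where u: "u \<in> gw_tree f" "length u = n j" "\<rho> j \<le> f u"
        using \<rho>_pos by (auto simp: le_gen_max_iff)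
      with j False obtain x where x: "u = v @ x" by (auto simp: high_outside_def prefix_def)
      have "n j \<noteq> n i" using n_inj i j by (auto dest: inj_onD)
      then have "n i < n j" "x \<in> ulam_generation (n j - n i)"
        using u v x by (auto simp: ulam_generation_def)
      with j u x show ?thesis by (auto simp: high_descendant_def)
    qed
    with f show ?thesis by blast
  qed (use f in blast)
qed

lemma emeasure_in_gw_tree_coordinate_le:
  assumes v: "v \<in> ulam_generation (n i)"
  shows "emeasure (gw_space p) ({f. v \<in> gw_tree f} \<inter> {f. f v \<in> {\<rho> i}})
    \<le> emeasure (gw_space p) (lone_max v)
      + (emeasure (gw_space p) ({f. v \<in> gw_tree f} \<inter> high_outside v \<inter> {f. f v \<in> {\<rho> i}})
      + (\<Sum>j\<in>{j\<in>{1..m}. n i < n j}. emeasure (gw_space p) ({f. f v \<in> {\<rho> i}} \<inter> high_descendant v j)))"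
proof -
  let ?P = "emeasure (gw_space p)" and ?J = "{j\<in>{1..m}. n i < n j}"
  let ?X1 = "{f. v \<in> gw_tree f} \<inter> high_outside v \<inter> {f. f v \<in> {\<rho> i}}"
  let ?X2 = "\<lambda>j. {f. f v \<in> {\<rho> i}} \<inter> high_descendant v j"
  have sets: "?X1 \<in> sets (gw_space p)" "?X2 j \<in> sets (gw_space p)" for j
    by (intro sets.Int sets_gw_space_Collect pred_gw_coordinate pred_in_gw_tree sets_high_outside
        sets_high_descendant)+
  have "?P ({f. v \<in> gw_tree f} \<inter> {f. f v \<in> {\<rho> i}}) \<le> ?P (lone_max v \<union> ?X1 \<union> (\<Union>j\<in>?J. ?X2 j))"
    using in_gw_tree_coordinate_subset[OF v] sets by (intro emeasure_mono sets.Un sets.finite_UN) auto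
  also have "\<dots> \<le> ?P (lone_max v) + ?P ?X1 + ?P (\<Union>j\<in>?J. ?X2 j)"
    using sets by (intro emeasure_subadditive[THEN order_trans] add_right_mono emeasure_subadditive) auto
  also have "?P (\<Union>j\<in>?J. ?X2 j) \<le> (\<Sum>j\<in>?J. ?P (?X2 j))"
    using sets by (intro emeasure_subadditive_finite) auto
  finally show ?thesis by (simp add: add_mono add.assoc)
qed

lemma emeasure_high_outside_le:
  "emeasure (gw_space p) ({f. v \<in> gw_tree f} \<inter> high_outside v \<inter> {f. f v \<in> {\<rho> i}})
    \<le> emeasure (gw_space p) ({f. v \<in> gw_tree f} \<inter> some_gen_max_reaches n \<rho> m) * pmf p (\<rho> i)"
proof -
  let ?S = "{f. v \<in> gw_tree f} \<inter> high_outside v"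
  have "?S \<in> sets (gw_space p)"
    by (intro sets.Int sets_gw_space_Collect) measurable
  moreover have "f(v := y) \<in> ?S \<longleftrightarrow> f \<in> ?S" for f y
  proof -
    have "u \<in> gw_tree (f(v := y)) \<longleftrightarrow> u \<in> gw_tree f" "(f(v := y)) u = f u" if "\<not> prefix v u" for u
      using that in_gw_tree_fun_upd[of v u f y] by (auto simp: strict_prefix_def)
    then show ?thesis
      unfolding high_outside_def Int_iff mem_Collect_eq in_gw_tree_fun_upd[of v v f y, simplified] by metis
  qed
  ultimately have "emeasure (gw_space p) (?S \<inter> {f. f v \<in> {\<rho> i}}) = emeasure (gw_space p) ?S * pmf p (\<rho> i)"
    unfolding emeasure_pmf_single[symmetric] by (rule emeasure_gw_space_Int_coordinate)
  also have "\<dots> \<le> emeasure (gw_space p) ({f. v \<in> gw_tree f} \<inter> some_gen_max_reaches n \<rho> m) * pmf p (\<rho> i)"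
  proof (intro mult_right_mono emeasure_mono Int_mono subsetI order.refl)
    fix f assume "f \<in> high_outside v"
    then show "f \<in> some_gen_max_reaches n \<rho> m"
      using \<rho>_pos by (force simp: high_outside_def some_gen_max_reaches_def le_gen_max_iff)
  qed simp_all
  finally show ?thesis .
qed

lemma nn_integral_high_descendant_le:
  assumes j: "j \<in> {1..m}" "n i < n j"
  shows "(\<integral>\<^sup>+v. emeasure (gw_space p) ({f. f v \<in> {\<rho> i}} \<inter> high_descendant v j) \<partial>count_space (ulam_generation (n i)))
    \<le> ennreal (pmf p (\<rho> i)) * (of_nat (\<rho> i) * ennreal (gw_mean p ^ (n j - 1)) * emeasure (measure_pmf p) {\<rho> j..})"
proof -
  define d where "d = n j - n i - 1"
  have d: "n j - n i = Suc d" "n i + d = n j - 1" using j by (auto simp: d_def)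
  have "(\<integral>\<^sup>+v. emeasure (gw_space p) ({f. f v \<in> {\<rho> i}} \<inter> high_descendant v j) \<partial>count_space (ulam_generation (n i)))
      \<le> (\<integral>\<^sup>+v. emeasure (gw_space p) {f. v \<in> gw_tree f}
        * (ennreal (pmf p (\<rho> i)) * of_nat (\<rho> i) * ennreal (gw_mean p ^ d) * emeasure (measure_pmf p) {\<rho> j..})
        \<partial>count_space (ulam_generation (n i)))"
    using emeasure_descendant_ge_le by (intro nn_integral_mono) (simp add: high_descendant_def d mult.assoc)
  also have "\<dots> = ennreal (gw_mean p ^ n i)
      * (ennreal (pmf p (\<rho> i)) * of_nat (\<rho> i) * ennreal (gw_mean p ^ d) * emeasure (measure_pmf p) {\<rho> j..})"
    by (simp add: nn_integral_multc nn_integral_in_gw_tree)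
  also have "\<dots> = ennreal (pmf p (\<rho> i)) * (of_nat (\<rho> i) * ennreal (gw_mean p ^ (n j - 1)) * emeasure (measure_pmf p) {\<rho> j..})"
  proof -
    have "ennreal (gw_mean p ^ (n j - 1)) = ennreal (gw_mean p ^ n i) * ennreal (gw_mean p ^ d)"
      unfolding d(2)[symmetric] power_add using gw_mean_nonneg[of p] by (simp add: ennreal_mult)
    then show ?thesis by (simp add: mult_ac)
  qed
  finally show ?thesis .
qed

lemma emeasure_gen_max_hits_ge:
  "ennreal (gw_mean p ^ n i) * pmf p (\<rho> i) \<le> emeasure (gw_space p) (gen_max_hits n \<rho> m i)
    + pmf p (\<rho> i) * ((\<integral>\<^sup>+v. emeasure (gw_space p) ({f. v \<in> gw_tree f} \<inter> some_gen_max_reaches n \<rho> m)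
        \<partial>count_space (ulam_generation (n i)))
      + (\<Sum>j\<in>{j\<in>{1..m}. n i < n j}. of_nat (\<rho> i) * ennreal (gw_mean p ^ (n j - 1)) * emeasure (measure_pmf p) {\<rho> j..}))"
proof -
  let ?P = "emeasure (gw_space p)" and ?J = "{j\<in>{1..m}. n i < n j}"
  let ?X1 = "\<lambda>v. {f. v \<in> gw_tree f} \<inter> high_outside v \<inter> {f. f v \<in> {\<rho> i}}"
  let ?X2 = "\<lambda>v j. {f. f v \<in> {\<rho> i}} \<inter> high_descendant v j"
  have "ennreal (gw_mean p ^ n i) * pmf p (\<rho> i)
      = (\<integral>\<^sup>+v. ?P ({f. v \<in> gw_tree f} \<inter> {f. f v \<in> {\<rho> i}}) \<partial>count_space (ulam_generation (n i)))"
    by (subst emeasure_in_gw_tree_coordinate) (simp add: nn_integral_multc nn_integral_in_gw_tree emeasure_pmf_single)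
  also have "\<dots> \<le> (\<integral>\<^sup>+v. ?P (lone_max v) + (?P (?X1 v) + (\<Sum>j\<in>?J. ?P (?X2 v j)))
      \<partial>count_space (ulam_generation (n i)))"
    using emeasure_in_gw_tree_coordinate_le by (intro nn_integral_mono) simp
  also have "\<dots> = (\<integral>\<^sup>+v. ?P (lone_max v) \<partial>count_space (ulam_generation (n i)))
      + ((\<integral>\<^sup>+v. ?P (?X1 v) \<partial>count_space (ulam_generation (n i)))
      + (\<Sum>j\<in>?J. \<integral>\<^sup>+v. ?P (?X2 v j) \<partial>count_space (ulam_generation (n i))))"
    by (simp add: nn_integral_add nn_integral_sum)
  also have "\<dots> \<le> ?P (gen_max_hits n \<rho> m i)
      + ((\<integral>\<^sup>+v. ?P ({f. v \<in> gw_tree f} \<inter> some_gen_max_reaches n \<rho> m) * pmf p (\<rho> i) \<partial>count_space (ulam_generation (n i)))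
      + (\<Sum>j\<in>?J. ennreal (pmf p (\<rho> i)) * (of_nat (\<rho> i) * ennreal (gw_mean p ^ (n j - 1)) * emeasure (measure_pmf p) {\<rho> j..})))"
    by (intro add_mono nn_integral_lone_max_le nn_integral_mono emeasure_high_outside_le sum_mono
        nn_integral_high_descendant_le) auto
  also have "\<dots> = ?P (gen_max_hits n \<rho> m i) + pmf p (\<rho> i)
      * ((\<integral>\<^sup>+v. ?P ({f. v \<in> gw_tree f} \<inter> some_gen_max_reaches n \<rho> m) \<partial>count_space (ulam_generation (n i)))
      + (\<Sum>j\<in>?J. of_nat (\<rho> i) * ennreal (gw_mean p ^ (n j - 1)) * emeasure (measure_pmf p) {\<rho> j..}))"
    by (subst nn_integral_multc) (simp_all add: sum_distrib_left distrib_left mult.commute)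
  finally show ?thesis .
qed

lemma measure_gen_max_hits_ge:
  "gw_mean p ^ n i * pmf p (\<rho> i) \<le> measure (gw_space p) (gen_max_hits n \<rho> m i) + pmf p (\<rho> i) * gen_max_hits_error n \<rho> m i"
proof -
  have "ennreal (gw_mean p ^ n i * pmf p (\<rho> i)) = ennreal (gw_mean p ^ n i) * pmf p (\<rho> i)"
    using gw_mean_nonneg[of p] by (simp add: ennreal_mult)
  also have "\<dots> \<le> emeasure (gw_space p) (gen_max_hits n \<rho> m i) + pmf p (\<rho> i) * ennreal (gen_max_hits_error n \<rho> m i)"
    unfolding ennreal_gen_max_hits_error by (rule emeasure_gen_max_hits_ge)
  also have "\<dots> = ennreal (measure (gw_space p) (gen_max_hits n \<rho> m i) + pmf p (\<rho> i) * gen_max_hits_error n \<rho> m i)"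
    using gen_max_hits_error_nonneg[of n \<rho> m i] by (simp add: emeasure_gw_space_eq_measure ennreal_mult ennreal_plus)
  finally have "ennreal (gw_mean p ^ n i * pmf p (\<rho> i))
      \<le> ennreal (measure (gw_space p) (gen_max_hits n \<rho> m i) + pmf p (\<rho> i) * gen_max_hits_error n \<rho> m i)" .
  then show ?thesis
    using gen_max_hits_error_nonneg[of n \<rho> m i] by (simp add: ennreal_le_iff del: ennreal_plus)
qed

end

section \<open>Asymptotics of the error terms\<close>

lemma tail_mult_tendsto_zero: "(\<lambda>t. real t * measure (measure_pmf p) {t..}) \<longlonglongrightarrow> 0"
proof -
  define s where "s t x = real x * indicator {t..} x" for t x :: nat
  have lim: "(\<lambda>t. integral\<^sup>L (measure_pmf p) (s t)) \<longlonglongrightarrow> integral\<^sup>L (measure_pmf p) (\<lambda>x. 0::real)"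
  proof (rule integral_dominated_convergence[where w=real])
    show "AE x in measure_pmf p. (\<lambda>t. s t x) \<longlonglongrightarrow> 0"
    proof (rule AE_I2)
      fix x :: nat
      have "\<forall>\<^sub>F t in sequentially. s t x = 0"
        using eventually_gt_at_top[of x] by eventually_elim (auto simp: s_def)
      then show "(\<lambda>t. s t x) \<longlonglongrightarrow> 0" by (rule tendsto_eventually)
    qed
    show "AE x in measure_pmf p. norm (s t x) \<le> real x" for t
      by (rule AE_I2) (auto simp: s_def indicator_def)
  qed (auto simp: mean_finite)
  have le: "real t * measure (measure_pmf p) {t..} \<le> integral\<^sup>L (measure_pmf p) (s t)" for t
  proof -
    have "real t * measure (measure_pmf p) {t..} = integral\<^sup>L (measure_pmf p) (\<lambda>x. real t * indicator {t..} x)"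
      by simp
    also have "\<dots> \<le> integral\<^sup>L (measure_pmf p) (s t)"
      unfolding s_def using mean_finite
      by (intro integral_mono integrable_real_mult_indicator integrable_mult_right integrable_real_indicator)
        (auto simp: measure_pmf.emeasure_eq_measure indicator_def)
    finally show ?thesis .
  qed
  show ?thesis
  proof (rule tendsto_sandwich[OF _ _ tendsto_const])
    show "\<forall>\<^sub>F t in sequentially. real t * measure (measure_pmf p) {t..} \<le> integral\<^sup>L (measure_pmf p) (s t)"
      using le by simp
    show "(\<lambda>t. integral\<^sup>L (measure_pmf p) (s t)) \<longlonglongrightarrow> 0"
      using lim by simp
  qed simp
qed

lemma tail_tendsto_zero: "(\<lambda>t. measure (measure_pmf p) {t..}) \<longlonglongrightarrow> 0"
proof (rule tendsto_sandwich[OF _ _ tendsto_const tail_mult_tendsto_zero])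
  show "\<forall>\<^sub>F t in sequentially. measure (measure_pmf p) {t..} \<le> real t * measure (measure_pmf p) {t..}"
    using eventually_ge_at_top[of "1::nat"] by eventually_elim (simp add: mult_le_cancel_right1)
qed simp

lemma tail_mult_ratio_tendsto_zero:
  fixes a b c :: "nat \<Rightarrow> nat"
  assumes ratio: "limsup (\<lambda>k. ereal (real (a k) / real (b k))) < \<infinity>"
    and b: "\<forall>\<^sub>F k in sequentially. 0 < b k \<and> b k \<le> c k"
    and c: "filterlim c at_top sequentially"
  shows "(\<lambda>k. real (a k) * measure (measure_pmf p) {c k..}) \<longlonglongrightarrow> 0"
proof -
  from ratio have "limsup (\<lambda>k. ereal (real (a k) / real (b k))) \<noteq> \<infinity>" by simp
  then obtain N :: nat where "limsup (\<lambda>k. ereal (real (a k) / real (b k))) < ereal (real N)"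
    unfolding less_PInf_Ex_of_nat by blast
  then have N: "\<forall>\<^sub>F k in sequentially. real (a k) / real (b k) < real N"
    by (rule eventually_mono[OF Limsup_lessD]) simp
  have lim: "(\<lambda>k. real N * (real (c k) * measure (measure_pmf p) {c k..})) \<longlonglongrightarrow> real N * 0"
    using filterlim_compose[OF tail_mult_tendsto_zero c] by (intro tendsto_mult_left)
  have le: "\<forall>\<^sub>F k in sequentially.
      real (a k) * measure (measure_pmf p) {c k..} \<le> real N * (real (c k) * measure (measure_pmf p) {c k..})"
    using N b
  proof eventually_elim
    case (elim k)
    then have "real (a k) < real N * real (b k)"
      by (simp add: divide_less_eq)
    also have "\<dots> \<le> real N * real (c k)"
      using elim by (intro mult_left_mono) auto
    finally have "real (a k) \<le> real N * real (c k)" by simp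
    then show ?case by (simp add: mult_right_mono mult.assoc[symmetric])
  qed
  show ?thesis
  proof (rule tendsto_sandwich[OF _ le tendsto_const])
    show "\<forall>\<^sub>F k in sequentially. 0 \<le> real (a k) * measure (measure_pmf p) {c k..}"
      by (intro always_eventually allI mult_nonneg_nonneg) auto
    show "(\<lambda>k. real N * (real (c k) * measure (measure_pmf p) {c k..})) \<longlonglongrightarrow> 0"
      using lim by (simp only: mult_zero_right)
  qed
qed

lemma enn2real_nn_integral_in_gw_tree_Int_tendsto_zero:
  assumes H: "\<And>k. H k \<in> sets (gw_space p)" and H_lim: "(\<lambda>k. measure (gw_space p) (H k)) \<longlonglongrightarrow> 0"
  shows "(\<lambda>k. enn2real (\<integral>\<^sup>+v. emeasure (gw_space p) ({f. v \<in> gw_tree f} \<inter> H k)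
    \<partial>count_space (ulam_generation n))) \<longlonglongrightarrow> 0"
proof -
  have H_lim': "(\<lambda>k. emeasure (gw_space p) (H k)) \<longlonglongrightarrow> 0"
    using H_lim unfolding emeasure_gw_space_eq_measure by (metis ennreal_0 tendsto_ennrealI)
  have "(\<lambda>k. \<integral>\<^sup>+v. emeasure (gw_space p) ({f. v \<in> gw_tree f} \<inter> H k) \<partial>count_space (ulam_generation n))
      \<longlonglongrightarrow> (\<integral>\<^sup>+v. 0 \<partial>count_space (ulam_generation n))"
  proof (rule nn_integral_dominated_convergence[where w="\<lambda>v. emeasure (gw_space p) {f. v \<in> gw_tree f}"])
    show "(\<integral>\<^sup>+v. emeasure (gw_space p) {f. v \<in> gw_tree f} \<partial>count_space (ulam_generation n)) < \<infinity>"
      by (simp add: nn_integral_in_gw_tree)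
    show "AE v in count_space (ulam_generation n).
        emeasure (gw_space p) ({f. v \<in> gw_tree f} \<inter> H k) \<le> emeasure (gw_space p) {f. v \<in> gw_tree f}" for k
      by (intro AE_I2 emeasure_mono) (auto intro: sets_gw_space_Collect)
    show "AE v in count_space (ulam_generation n). (\<lambda>k. emeasure (gw_space p) ({f. v \<in> gw_tree f} \<inter> H k)) \<longlonglongrightarrow> 0"
      using H by (intro AE_I2 tendsto_sandwich[OF _ _ tendsto_const H_lim'] always_eventually allI emeasure_mono) auto
  qed auto
  then show ?thesis by (intro tendsto_enn2real[where l=0]) simp_all
qed

lemma measure_some_gen_max_reaches_tendsto_zero:
  assumes "\<And>j. j \<in> {1..m} \<Longrightarrow> filterlim (\<lambda>k. \<rho> k j) at_top sequentially"
  shows "(\<lambda>k. measure (gw_space p) (some_gen_max_reaches n (\<rho> k) m)) \<longlonglongrightarrow> 0"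
proof (rule tendsto_sandwich[OF _ _ tendsto_const])
  have "(\<lambda>k. \<Sum>j=1..m. gw_mean p ^ n j * measure (measure_pmf p) {\<rho> k j..}) \<longlonglongrightarrow> (\<Sum>j=1..m. gw_mean p ^ n j * 0)"
    using assms by (intro tendsto_sum tendsto_mult_left filterlim_compose[OF tail_tendsto_zero])
  then show "(\<lambda>k. \<Sum>j=1..m. gw_mean p ^ n j * measure (measure_pmf p) {\<rho> k j..}) \<longlonglongrightarrow> 0"
    by simp
  have "measure (gw_space p) (some_gen_max_reaches n (\<rho> k) m)
      \<le> (\<Sum>j=1..m. gw_mean p ^ n j * measure (measure_pmf p) {\<rho> k j..})"
    if pos: "\<forall>j\<in>{1..m}. 0 < \<rho> k j" for k
  proof -
    have "some_gen_max_reaches n (\<rho> k) m = (\<Union>j\<in>{1..m}. {f. \<rho> k j \<le> gen_max f (n j)})"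
      by (auto simp: some_gen_max_reaches_def)
    then have "measure (gw_space p) (some_gen_max_reaches n (\<rho> k) m)
        \<le> (\<Sum>j=1..m. measure (gw_space p) {f. \<rho> k j \<le> gen_max f (n j)})"
      by (simp add: measure_UNION_le sets_gw_space_Collect)
    also have "\<dots> \<le> (\<Sum>j=1..m. gw_mean p ^ n j * measure (measure_pmf p) {\<rho> k j..})"
      using pos by (intro sum_mono measure_le_gen_max_le) auto
    finally show ?thesis .
  qed
  moreover have "\<forall>\<^sub>F k in sequentially. \<forall>j\<in>{1..m}. 0 < \<rho> k j"
  proof (intro eventually_ball_finite ballI)
    fix j assume "j \<in> {1..m}"
    from assms[OF this, unfolded filterlim_at_top, rule_format, of 1]
    show "\<forall>\<^sub>F k in sequentially. 0 < \<rho> k j" by (rule eventually_mono) simp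
  qed simp
  ultimately show "\<forall>\<^sub>F k in sequentially. measure (gw_space p) (some_gen_max_reaches n (\<rho> k) m)
      \<le> (\<Sum>j=1..m. gw_mean p ^ n j * measure (measure_pmf p) {\<rho> k j..})"
    by (auto elim: eventually_mono)
qed simp

lemma gen_max_hits_error_tendsto_zero:
  fixes r :: "nat \<Rightarrow> nat \<Rightarrow> nat"
  assumes i: "i \<in> {1..m}"
    and n_mono: "\<forall>i\<in>{1..m}. \<forall>j\<in>{1..m}. i < j \<longrightarrow> n i < n j"
    and r_min: "filterlim (\<lambda>k. Min (r k ` {1..m})) at_top sequentially"
    and r_ratio: "i < m \<Longrightarrow> limsup (\<lambda>k. ereal (real (r k i) / real (Min (r k ` {i<..m})))) < \<infinity>"
  shows "(\<lambda>k. gen_max_hits_error n (r k) m i) \<longlonglongrightarrow> 0"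
proof -
  have r_lim: "filterlim (\<lambda>k. r k j) at_top sequentially" if "j \<in> {1..m}" for j
    using filterlim_Min_image_subset[OF r_min, of "{j}"] that by simp
  have "(\<lambda>k. enn2real (\<integral>\<^sup>+v. emeasure (gw_space p) ({f. v \<in> gw_tree f} \<inter> some_gen_max_reaches n (r k) m)
      \<partial>count_space (ulam_generation (n i)))) \<longlonglongrightarrow> 0"
    using r_lim by (intro enn2real_nn_integral_in_gw_tree_Int_tendsto_zero
        measure_some_gen_max_reaches_tendsto_zero sets_some_gen_max_reaches)
  moreover have "(\<lambda>k. real (r k i) * gw_mean p ^ (n j - 1) * measure (measure_pmf p) {r k j..}) \<longlonglongrightarrow> 0"
    if j: "j \<in> {j\<in>{1..m}. n i < n j}" for j
  proof -
    have "i < j" using n_mono i j by (metis (mono_tags, lifting) mem_Collect_eq linorder_neqE_nat order.asym)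
    then have "i < m" "j \<in> {i<..m}" using j by auto
    then have "filterlim (\<lambda>k. Min (r k ` {i<..m})) at_top sequentially"
      using i by (intro filterlim_Min_image_subset[OF r_min]) auto
    from this[unfolded filterlim_at_top, rule_format, of 1]
    have "\<forall>\<^sub>F k in sequentially. 0 < Min (r k ` {i<..m}) \<and> Min (r k ` {i<..m}) \<le> r k j"
      by (rule eventually_mono) (use \<open>j \<in> {i<..m}\<close> in \<open>auto intro: Min_le\<close>)
    from tail_mult_ratio_tendsto_zero[OF r_ratio[OF \<open>i < m\<close>] this r_lim] j
    show ?thesis by (auto dest: tendsto_mult_right_zero[where c="gw_mean p ^ (n j - 1)"] simp: mult_ac)
  qed
  ultimately show ?thesis
    unfolding gen_max_hits_error_def by (intro tendsto_add_zero tendsto_null_sum) auto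
qed

end

theorem proposition2p4:
  fixes p :: "nat pmf" and m :: nat and n :: "nat \<Rightarrow> nat" and r :: "nat \<Rightarrow> nat \<Rightarrow> nat"
  assumes mean_fin: "integrable (measure_pmf p) real"
    and mean_pos: "gw_mean p > 0"
    and unbounded: "infinite {k. pmf p k > 0}"
    and m_pos: "m \<ge> 1"
    and n_pos: "\<forall>i\<in>{1..m}. n i > 0"
    and n_mono: "\<forall>i\<in>{1..m}. \<forall>j\<in>{1..m}. i < j \<longrightarrow> n i < n j"
    and r_pos: "\<forall>k\<ge>1. \<forall>i\<in>{1..m}. r k i > 0"
    and r_prob: "\<forall>k\<ge>1. (\<Sum>i=1..m. pmf p (r k i)) > 0"
    and r_min: "filterlim (\<lambda>k. Min (r k ` {1..m})) at_top sequentially"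
    and r_ratio: "\<forall>j. 1 \<le> j \<and> j < m \<longrightarrow>
        limsup (\<lambda>k. ereal (real (r k j) / real (Min (r k ` {j<..m})))) < \<infinity>"
  shows "(\<lambda>k. measure (gw_space p)
            {\<omega> \<in> space (gw_space p). \<exists>i\<in>{1..m}. gen_max \<omega> (n i) = r k i \<and>
               (\<forall>j\<in>{1..m}. j \<noteq> i \<longrightarrow> gen_max \<omega> (n j) < r k j)})
         \<sim>[sequentially] (\<lambda>k. \<Sum>i=1..m. gw_mean p ^ n i * pmf p (r k i))"
  unfolding measure_gen_max_hits_Union
proof (rule asymp_equiv_sum_sandwich[where e="\<lambda>k i. gen_max_hits_error p n (r k) m i / gw_mean p ^ n i"])
  have n_inj: "inj_on n {1..m}"
    using n_mono by (intro inj_onI) (metis linorder_neqE_nat less_irrefl)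
  show "\<forall>\<^sub>F k in sequentially. \<forall>i\<in>{1..m}. 0 \<le> measure (gw_space p) (gen_max_hits n (r k) m i)
      \<and> measure (gw_space p) (gen_max_hits n (r k) m i) \<le> gw_mean p ^ n i * pmf p (r k i)
      \<and> gw_mean p ^ n i * pmf p (r k i) \<le> measure (gw_space p) (gen_max_hits n (r k) m i)
          + gw_mean p ^ n i * pmf p (r k i) * (gen_max_hits_error p n (r k) m i / gw_mean p ^ n i)"
    using eventually_ge_at_top[of 1]
  proof eventually_elim
    case (elim k)
    with r_pos have "\<forall>j\<in>{1..m}. 0 < r k j" by auto
    with mean_pos show ?case
      using measure_gen_max_hits_ge[OF mean_fin _ _ n_inj] measure_gen_max_eq_le[OF mean_fin]
      by (simp add: gen_max_hits_def)
  qed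
  show "(\<lambda>k. gen_max_hits_error p n (r k) m i / gw_mean p ^ n i) \<longlonglongrightarrow> 0" if "i \<in> {1..m}" for i
    using gen_max_hits_error_tendsto_zero[OF mean_fin that n_mono r_min] r_ratio that
    by (intro tendsto_divide_zero) auto
  show "\<forall>\<^sub>F k in sequentially. 0 < (\<Sum>i=1..m. gw_mean p ^ n i * pmf p (r k i))"
    using eventually_ge_at_top[of 1] by eventually_elim (use mean_pos r_prob in \<open>auto intro: sum_mult_pos\<close>)
qed simp

end
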